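(* Let $\mathcal H$ be a finite-dimensional Hilbert space, $H_0$ a Hermitian operator on $\mathcal H$ whose largest and smallest eigenvalues are $N/2$ and $-N/2$ ($N>0$), with eigenvectors $|\lambda_+\rangle,|\lambda_-\rangle$. For a unit vector $|\psi_0\rangle$ and a unitary $U_1$ on $\mathcal H$, let $|\psi_\gamma\rangle=e^{i\gamma H_0}U_1e^{-i\gamma H_0}|\psi_0\rangle$. Then for all $\gamma$, $I_\gamma(|\psi_\gamma\rangle)\le 4N^2$, and $$\max_{|\psi_0\rangle,\,U_1} I_\gamma(|\psi_\gamma\rangle)=4N^2,$$ the maximum being attained e.g. by $|\psi_0\rangle=\tfrac{1}{\sqrt2}(|\lambda_+\rangle+e^{i\alpha}|\lambda_-\rangle)$ and any $U_1$ acting on $\mathrm{span}\{|\lambda_+\rangle,|\lambda_-\rangle\}$ as $\cos\chi\,\sigma_x+\sin\chi\,\sigma_y$ (in the basis $|\lambda_+\rangle,|\lambda_-\rangle$) and leaving its orthogonal complement invariant.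
   Context: $\sigma_x,\sigma_y$ are Pauli matrices. For a differentiable family of pure states, the quantum Fisher information is $I_\gamma=4\big(\langle\partial_\gamma\psi_\gamma|\partial_\gamma\psi_\gamma\rangle-|\langle\psi_\gamma|\partial_\gamma\psi_\gamma\rangle|^2\big)$. *)

theory Defs
  imports "HOL-Analysis.Analysis"
begin

text \<open>Finite-dimensional Hilbert space = complex ^ 'n with 'n a finite index type.
  Operators are complex matrices complex ^ 'n ^ 'n acting by *v.\<close>

definition cinner :: "complex ^ 'n \<Rightarrow> complex ^ 'n \<Rightarrow> complex" where
  "cinner x y = (\<Sum>i\<in>UNIV. cnj (x $ i) * y $ i)"

definition adjoint_mat :: "complex ^ 'n ^ 'n \<Rightarrow> complex ^ 'n ^ 'n" where
  "adjoint_mat A = (\<chi> i j. cnj (A $ j $ i))"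

definition hermitian :: "complex ^ 'n ^ 'n \<Rightarrow> bool" where
  "hermitian A \<longleftrightarrow> adjoint_mat A = A"

definition unitary :: "complex ^ 'n ^ 'n \<Rightarrow> bool" where
  "unitary U \<longleftrightarrow> adjoint_mat U ** U = mat 1"

definition is_eigenvalue :: "complex ^ 'n ^ 'n \<Rightarrow> complex \<Rightarrow> bool" where
  "is_eigenvalue A c \<longleftrightarrow> (\<exists>v. v \<noteq> 0 \<and> A *v v = c *s v)"

definition cmat_scale :: "complex \<Rightarrow> complex ^ 'n ^ 'n \<Rightarrow> complex ^ 'n ^ 'n" where
  "cmat_scale c A = (\<chi> i j. c * A $ i $ j)"

primrec mpow :: "complex ^ 'n ^ 'n \<Rightarrow> nat \<Rightarrow> complex ^ 'n ^ 'n" where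
  "mpow A 0 = mat 1"
| "mpow A (Suc k) = A ** mpow A k"

definition mexp :: "complex ^ 'n ^ 'n \<Rightarrow> complex ^ 'n ^ 'n" where
  "mexp A = (\<Sum>k. (1 / fact k) *\<^sub>R mpow A k)"

definition QFI :: "(real \<Rightarrow> complex ^ 'n) \<Rightarrow> real \<Rightarrow> real" where
  "QFI psi g = (let d = vector_derivative psi (at g) in
     4 * (Re (cinner d d) - (cmod (cinner (psi g) d))\<^sup>2))"

definition encoded :: "complex ^ 'n ^ 'n \<Rightarrow> complex ^ 'n ^ 'n \<Rightarrow> complex ^ 'n \<Rightarrow> real \<Rightarrow> complex ^ 'n" where
  "encoded H0 U1 psi0 g =
     (mexp (cmat_scale (\<i> * of_real g) H0) ** U1 ** mexp (cmat_scale (- \<i> * of_real g) H0)) *v psi0"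

end

theory Submission
  imports Defs
begin

text \<open>Write \<open>P\<^sub>t = e\<^sup>i\<^sup>t\<^sup>H\<^sup>0\<close>, so that \<open>\<psi>\<^sub>\<gamma> = P\<^sub>\<gamma> U\<^sub>1 P\<^sub>-\<^sub>\<gamma> \<psi>\<^sub>0\<close>. With
  \<open>\<phi> = P\<^sub>-\<^sub>\<gamma> \<psi>\<^sub>0\<close> the derivative is \<open>\<partial>\<psi>\<^sub>\<gamma> = i P\<^sub>\<gamma> (H\<^sub>0 U\<^sub>1 - U\<^sub>1 H\<^sub>0) \<phi>\<close>. Since
  \<open>P\<^sub>t\<close> and \<open>U\<^sub>1\<close> are unitary and the operator norm of the Hermitian \<open>H\<^sub>0\<close> is its largest
  absolute eigenvalue \<open>N/2\<close>, we get \<open>\<parallel>\<partial>\<psi>\<^sub>\<gamma>\<parallel> \<le> N\<close> and hence \<open>I\<^sub>\<gamma> \<le> 4\<parallel>\<partial>\<psi>\<^sub>\<gamma>\<parallel>\<^sup>2 \<le> 4N\<^sup>2\<close>.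

  If \<open>\<psi>\<^sub>0 = z\<^sub>+ \<lambda>\<^sub>+ + z\<^sub>- \<lambda>\<^sub>-\<close> and \<open>U\<^sub>1\<close> exchanges \<open>\<lambda>\<^sub>\<plusminus>\<close> up to phases, the state stays in
  \<open>span {\<lambda>\<^sub>+, \<lambda>\<^sub>-}\<close>, where \<open>\<psi>\<^sub>\<gamma> = Z \<lambda>\<^sub>+ + W \<lambda>\<^sub>-\<close> and \<open>\<partial>\<psi>\<^sub>\<gamma> = iN (Z \<lambda>\<^sub>+ - W \<lambda>\<^sub>-)\<close> with
  \<open>|Z| = |z\<^sub>-|\<close>, \<open>|W| = |z\<^sub>+|\<close>. Hence \<open>I\<^sub>\<gamma> = 4N\<^sup>2 (1 - (|z\<^sub>+|\<^sup>2 - |z\<^sub>-|\<^sup>2)\<^sup>2)\<close>, which equals \<open>4N\<^sup>2\<close>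
  exactly for balanced weights.\<close>

section \<open>The sesquilinear inner product\<close>

lemma inner_vec_eq_Re_cinner: "inner (x::complex^'n) y = Re (cinner x y)"
  by (simp add: inner_vec_def cinner_def inner_complex_def Re_sum)

lemma norm_power2_eq_Re_cinner: "(norm (x::complex^'n))\<^sup>2 = Re (cinner x x)"
  by (simp add: power2_norm_eq_inner inner_vec_eq_Re_cinner)

lemma cnj_cinner: "cnj (cinner x y) = cinner y x"
  by (simp add: cinner_def mult.commute)

lemma cinner_self_eq_norm_power2: "cinner x x = of_real ((norm x)\<^sup>2)"
proof -
  have "Im (cinner x x) = 0"
    using arg_cong[OF cnj_cinner[of x x], of Im] by simp
  then show ?thesis by (simp add: complex_eq_iff norm_power2_eq_Re_cinner)
qed

lemma cinner_add_left: "cinner (x + y) z = cinner x z + cinner y z"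
  by (simp add: cinner_def distrib_right sum.distrib)

lemma cinner_add_right: "cinner x (y + z) = cinner x y + cinner x z"
  by (simp add: cinner_def distrib_left sum.distrib)

lemma cinner_diff_right: "cinner x (y - z) = cinner x y - cinner x z"
  by (simp add: cinner_def right_diff_distrib sum_subtractf)

lemma cinner_smult_left: "cinner (c *s x) y = cnj c * cinner x y"
  by (simp add: cinner_def sum_distrib_left mult_ac)

lemma cinner_smult_right: "cinner x (c *s y) = c * cinner x y"
  by (simp add: cinner_def sum_distrib_left mult_ac)

lemma cinner_orthonormal_combination:
  assumes "cinner u u = 1" "cinner w w = 1" "cinner u w = 0"
  shows "cinner (a *s u + b *s w) (c *s u + d *s w) = cnj a * c + cnj b * d"
proof -
  have "cinner w u = 0" using assms(3) cnj_cinner[of u w] by simp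
  then show ?thesis using assms
    by (simp add: cinner_add_left cinner_add_right cinner_smult_left cinner_smult_right)
qed

lemma norm_orthonormal_combination_power2:
  assumes "cinner u u = 1" "cinner w w = 1" "cinner u w = 0"
  shows "(norm (a *s u + b *s w))\<^sup>2 = (cmod a)\<^sup>2 + (cmod b)\<^sup>2"
proof -
  have "(norm (a *s u + b *s w))\<^sup>2 = Re (cnj a * a + cnj b * b)"
    using cinner_orthonormal_combination[OF assms, of a b a b] by (simp add: norm_power2_eq_Re_cinner)
  moreover have "Re (cnj z * z) = (cmod z)\<^sup>2" for z
    by (simp add: cmod_power2 flip: power2_eq_square)
  ultimately show ?thesis by simp
qed

lemma cinner_matrix_vector_left: "cinner (A *v x) y = cinner x (adjoint_mat A *v y)"
proof -
  have "cinner (A *v x) y = (\<Sum>i\<in>UNIV. \<Sum>j\<in>UNIV. cnj (x$j) * (cnj (A$i$j) * y$i))"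
    unfolding cinner_def matrix_vector_mult_def
    by (simp add: sum_distrib_right sum_distrib_left mult_ac)
  also have "\<dots> = (\<Sum>j\<in>UNIV. \<Sum>i\<in>UNIV. cnj (x$j) * (cnj (A$i$j) * y$i))"
    by (rule sum.swap)
  also have "\<dots> = cinner x (adjoint_mat A *v y)"
    unfolding cinner_def matrix_vector_mult_def adjoint_mat_def by (simp add: sum_distrib_left)
  finally show ?thesis .
qed

lemma hermitian_cinner_matrix_vector:
  "hermitian H \<Longrightarrow> cinner (H *v x) y = cinner x (H *v y)"
  by (metis cinner_matrix_vector_left hermitian_def)

lemma hermitian_cinner_real: "hermitian H \<Longrightarrow> Im (cinner x (H *v x)) = 0"
  using arg_cong[OF cnj_cinner[of x "H *v x"], of Im]
  by (simp add: hermitian_cinner_matrix_vector)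

lemma hermitian_eigenvectors_orthogonal:
  assumes "hermitian H" "H *v v = of_real a *s v" "H *v w = of_real b *s w" "a \<noteq> b"
  shows "cinner v w = 0"
proof -
  have "cinner (H *v v) w = cinner v (H *v w)"
    using assms(1) by (rule hermitian_cinner_matrix_vector)
  then have "of_real (a - b) * cinner v w = 0"
    by (simp add: assms(2,3) cinner_smult_left cinner_smult_right algebra_simps)
  then show ?thesis using assms(4) by simp
qed

lemma unitary_norm_preserving: "unitary U \<Longrightarrow> norm (U *v x) = norm x"
proof -
  assume "unitary U"
  then have "cinner (U *v x) (U *v x) = cinner x x"
    by (simp add: cinner_matrix_vector_left matrix_vector_mul_assoc unitary_def)
  then have "(norm (U *v x))\<^sup>2 = (norm x)\<^sup>2" by (simp add: norm_power2_eq_Re_cinner)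
  then show ?thesis by (simp add: power2_eq_iff_nonneg)
qed

lemma norm_smult_unimodular: "cmod c = 1 \<Longrightarrow> norm (c *s (v::complex^'n)) = norm v"
proof -
  assume "cmod c = 1"
  then have "cnj c * c = 1" using complex_norm_square[of c] by (simp add: mult.commute)
  then have "cinner (c *s v) (c *s v) = cinner v v"
    by (simp add: cinner_smult_left cinner_smult_right mult.assoc[symmetric] mult.commute[of c])
  then have "(norm (c *s v))\<^sup>2 = (norm v)\<^sup>2" by (simp add: norm_power2_eq_Re_cinner)
  then show ?thesis by (simp add: power2_eq_iff_nonneg)
qed

lemma scaleR_eq_smult_of_real: "r *\<^sub>R (v::complex^'n) = of_real r *s v"
  by (simp add: vec_eq_iff) (simp add: scaleR_conv_of_real)

lemma matrix_vector_mult_scaleR_complex: "A *v (r *\<^sub>R v) = r *\<^sub>R (A *v (v::complex^'n))"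
  by (simp add: scaleR_eq_smult_of_real vector_scalar_commute)

section \<open>The norm of a Hermitian matrix\<close>

lemma linear_coeff_zero_if_quadratic_nonpos:
  fixes a b :: real
  assumes "\<And>t. 2 * t * a + t\<^sup>2 * b \<le> 0"
  shows "a = 0"
proof -
  define c where "c = \<bar>b\<bar> + 1"
  have c: "c > 0" unfolding c_def by simp
  have "a\<^sup>2 * (2 * c + b) = (2 * (a / c) * a + (a / c)\<^sup>2 * b) * c\<^sup>2"
    using c by (simp add: field_simps power2_eq_square)
  also have "\<dots> \<le> 0"
    using assms[of "a / c"] by (simp add: mult_nonpos_nonneg)
  finally have "a\<^sup>2 * (2 * c + b) \<le> 0" .
  moreover have "2 * c + b > 0" unfolding c_def by (cases "b \<ge> 0") simp_all
  ultimately show ?thesis by (simp add: mult_le_0_iff)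
qed

lemma norm_add_scaleR_power2:
  "(norm (a + t *\<^sub>R b))\<^sup>2 = (norm (a::'a::real_inner))\<^sup>2 + 2 * t * inner a b + t\<^sup>2 * (norm b)\<^sup>2"
proof -
  have "(norm (a + t *\<^sub>R b))\<^sup>2 = inner (a + t *\<^sub>R b) (a + t *\<^sub>R b)"
    by (rule power2_norm_eq_inner)
  also have "\<dots> = inner a a + 2 * t * inner a b + t\<^sup>2 * inner b b"
    by (simp add: inner_add_left inner_add_right inner_commute[of b a] power2_eq_square algebra_simps)
  finally show ?thesis by (simp add: power2_norm_eq_inner)
qed

lemma matrix_vector_mult_attains_max_norm:
  fixes H :: "complex^'n^'n"
  obtains x0 where "norm x0 = 1" "\<And>z. (norm (H *v z))\<^sup>2 \<le> (norm (H *v x0))\<^sup>2 * (norm z)\<^sup>2"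
proof -
  have "\<exists>x\<in>sphere 0 1. \<forall>y\<in>sphere 0 1. (norm (H *v y))\<^sup>2 \<le> (norm (H *v x))\<^sup>2"
    by (intro continuous_attains_sup compact_sphere continuous_intros linear_continuous_on
        matrix_vector_mul_bounded_linear) simp
  then obtain x0 where x0: "norm x0 = 1"
    and max: "\<And>y. norm y = 1 \<Longrightarrow> (norm (H *v y))\<^sup>2 \<le> (norm (H *v x0))\<^sup>2"
    by auto
  have "(norm (H *v z))\<^sup>2 \<le> (norm (H *v x0))\<^sup>2 * (norm z)\<^sup>2" for z
  proof (cases "z = 0")
    case False
    then have "(norm (H *v z))\<^sup>2 / (norm z)\<^sup>2 = (norm (H *v (inverse (norm z) *\<^sub>R z)))\<^sup>2"
      by (simp add: matrix_vector_mult_scaleR_complex power_divide divide_inverse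
          power_mult_distrib power_inverse)
    also have "\<dots> \<le> (norm (H *v x0))\<^sup>2"
      using False by (intro max) simp
    finally show ?thesis using False by (simp add: divide_le_eq)
  qed simp
  with x0 show thesis by (rule that)
qed

text \<open>The first variation of \<open>\<parallel>H x\<parallel>\<^sup>2 - \<mu> \<parallel>x\<parallel>\<^sup>2\<close> vanishes at the maximiser.\<close>
lemma hermitian_maximiser_eigenvector_square:
  fixes H :: "complex^'n^'n"
  assumes herm: "hermitian H" and x0: "norm x0 = 1"
    and max: "\<And>z. (norm (H *v z))\<^sup>2 \<le> (norm (H *v x0))\<^sup>2 * (norm z)\<^sup>2"
  shows "H *v (H *v x0) = of_real ((norm (H *v x0))\<^sup>2) *s x0"
proof -
  define \<mu> where "\<mu> = (norm (H *v x0))\<^sup>2"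
  have first_variation: "inner (H *v x0) (H *v y) - \<mu> * inner x0 y = 0" for y
  proof (rule linear_coeff_zero_if_quadratic_nonpos[where b = "(norm (H *v y))\<^sup>2 - \<mu> * (norm y)\<^sup>2"])
    fix t :: real
    have "(norm (H *v x0 + t *\<^sub>R (H *v y)))\<^sup>2 \<le> \<mu> * (norm (x0 + t *\<^sub>R y))\<^sup>2"
      using max[of "x0 + t *\<^sub>R y"] unfolding \<mu>_def
      by (simp add: matrix_vector_right_distrib matrix_vector_mult_scaleR_complex)
    then show "2 * t * (inner (H *v x0) (H *v y) - \<mu> * inner x0 y)
        + t\<^sup>2 * ((norm (H *v y))\<^sup>2 - \<mu> * (norm y)\<^sup>2) \<le> 0"
      unfolding norm_add_scaleR_power2 \<mu>_def[symmetric] using x0 by (simp add: algebra_simps)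
  qed
  have "inner (H *v x0) (H *v y) = inner (H *v (H *v x0)) y" for y
    using herm by (simp add: inner_vec_eq_Re_cinner hermitian_cinner_matrix_vector)
  then have "inner (H *v (H *v x0) - \<mu> *\<^sub>R x0) y = 0" for y
    using first_variation[of y] by (simp add: inner_diff_left)
  from this[of "H *v (H *v x0) - \<mu> *\<^sub>R x0"] show ?thesis
    unfolding \<mu>_def by (simp add: scaleR_eq_smult_of_real)
qed

lemma eigenvalue_of_eigenvalue_square:
  assumes "A *v (A *v x) = (s * s) *s x" "x \<noteq> 0"
  shows "is_eigenvalue A s \<or> is_eigenvalue A (- s)"
proof (cases "A *v x + s *s x = 0")
  case True
  then have "A *v x = (- s) *s x" by (simp add: vec_eq_iff add_eq_0_iff)
  then show ?thesis using assms(2) is_eigenvalue_def by blast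
next
  case False
  have "A *v (A *v x + s *s x) = s *s (A *v x + s *s x)"
    using assms(1) by (simp add: matrix_vector_right_distrib vector_scalar_commute vec_eq_iff
        algebra_simps)
  then show ?thesis using False is_eigenvalue_def by blast
qed

lemma hermitian_norm_matrix_vector_le:
  fixes H :: "complex^'n^'n"
  assumes herm: "hermitian H"
    and spectrum: "\<And>c. is_eigenvalue H c \<Longrightarrow> - R \<le> Re c \<and> Re c \<le> R"
  shows "norm (H *v x) \<le> R * norm x"
proof -
  obtain x0 where x0: "norm x0 = 1"
    and max: "\<And>z. (norm (H *v z))\<^sup>2 \<le> (norm (H *v x0))\<^sup>2 * (norm z)\<^sup>2"
    using matrix_vector_mult_attains_max_norm[of H] by blast
  define s where "s = norm (H *v x0)"
  have "H *v (H *v x0) = (of_real s * of_real s) *s x0"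
    using hermitian_maximiser_eigenvector_square[OF herm x0 max]
    by (simp add: s_def power2_eq_square)
  moreover have "x0 \<noteq> 0" using x0 by auto
  ultimately have "is_eigenvalue H (of_real s) \<or> is_eigenvalue H (- of_real s)"
    by (rule eigenvalue_of_eigenvalue_square)
  then have "s \<le> R"
  proof
    assume "is_eigenvalue H (of_real s)"
    from spectrum[OF this] show ?thesis by simp
  next
    assume "is_eigenvalue H (- of_real s)"
    from spectrum[OF this] show ?thesis by simp
  qed
  have "s \<ge> 0" unfolding s_def by simp
  have "(norm (H *v x))\<^sup>2 \<le> s\<^sup>2 * (norm x)\<^sup>2"
    using max[of x] unfolding s_def .
  also have "\<dots> \<le> (R * norm x)\<^sup>2"
    unfolding power_mult_distrib using \<open>s \<ge> 0\<close> \<open>s \<le> R\<close>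
    by (intro mult_right_mono power_mono) simp_all
  finally show ?thesis
    by (rule power2_le_imp_le) (use \<open>s \<ge> 0\<close> \<open>s \<le> R\<close> in simp)
qed

section \<open>The matrix exponential\<close>

lemma matrix_vector_mult_bounded:
  fixes A :: "complex^'n^'m"
  obtains K where "K \<ge> 0" "\<And>x. norm (A *v x) \<le> K * norm (x::complex^'n)"
proof -
  obtain K where "K \<ge> 0" "\<And>x. norm (A *v x) \<le> norm (x::complex^'n) * K"
    using bounded_linear.nonneg_bounded[OF matrix_vector_mul_bounded_linear[of A]] by blast
  then show thesis by (intro that[of K]) (simp_all add: mult.commute)
qed

lemma bounded_bilinear_matrix_vector_mult:
  "bounded_bilinear (\<lambda>(A::complex^'n^'n) (x::complex^'n). A *v x)"
proof -
  have "(r *\<^sub>R A) *v x = r *\<^sub>R (A *v x)" for r and A :: "complex^'n^'n" and x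
    by (simp add: vec_eq_iff matrix_vector_mult_def scaleR_sum_right)
  then have "bilinear (\<lambda>(A::complex^'n^'n) (x::complex^'n). A *v x)"
    unfolding bilinear_def
    by (auto intro!: linearI simp: matrix_vector_right_distrib matrix_vector_mult_add_rdistrib
        matrix_vector_mult_scaleR_complex)
  then show ?thesis by (simp add: bilinear_conv_bounded_bilinear)
qed

lemma matrix_entry_eq_axis: "(A::complex^'n^'n) $ a $ b = (A *v axis b 1) $ a"
proof -
  have "(A *v axis b 1) $ a = (\<Sum>j\<in>UNIV. if j = b then A $ a $ j else 0)"
    by (simp add: matrix_vector_mult_def axis_def if_distrib cong: if_cong)
  then show ?thesis by simp
qed

lemma summable_vec_componentwise:
  fixes f :: "nat \<Rightarrow> 'a::real_normed_vector ^'n"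
  assumes "\<And>i. summable (\<lambda>n. f n $ i)"
  shows "summable f" "suminf f $ i = (\<Sum>n. f n $ i)"
proof -
  have "f sums (\<chi> i. \<Sum>n. f n $ i)"
    unfolding sums_def
  proof (rule vec_tendstoI)
    fix i
    show "((\<lambda>n. sum f {..<n} $ i) \<longlongrightarrow> (\<chi> i. \<Sum>n. f n $ i) $ i) sequentially"
      using summable_LIMSEQ[OF assms[of i]] by simp
  qed
  then show "summable f" "suminf f $ i = (\<Sum>n. f n $ i)"
    by (auto simp: sums_iff)
qed

lemma sum_suminf_mult_swap:
  fixes f :: "nat \<Rightarrow> 'k::finite \<Rightarrow> complex"
  assumes "\<And>k. summable (\<lambda>n. f n k)"
  shows "(\<Sum>k\<in>UNIV. (\<Sum>n. f n k) * w k) = (\<Sum>n. \<Sum>k\<in>UNIV. f n k * w k)"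
proof -
  have "summable (\<lambda>n. f n k * w k)" for k
    using assms[of k] by (rule summable_mult2)
  then show ?thesis
    using assms by (simp add: suminf_mult2 suminf_sum)
qed

lemma cmat_scale_matrix_mult_left: "cmat_scale c A ** B = cmat_scale c (A ** B)"
  by (simp add: vec_eq_iff cmat_scale_def matrix_matrix_mult_def sum_distrib_left mult_ac)

lemma cmat_scale_matrix_mult_right: "A ** cmat_scale c B = cmat_scale c (A ** B)"
  by (simp add: vec_eq_iff cmat_scale_def matrix_matrix_mult_def sum_distrib_left mult_ac)

lemma cmat_scale_cmat_scale: "cmat_scale c (cmat_scale d A) = cmat_scale (c * d) A"
  by (simp add: vec_eq_iff cmat_scale_def mult_ac)

lemma cmat_scale_1: "cmat_scale 1 A = A"
  by (simp add: vec_eq_iff cmat_scale_def)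

lemma cmat_scale_matrix_vector_mult: "cmat_scale c A *v x = c *s (A *v x)"
  by (simp add: vec_eq_iff cmat_scale_def matrix_vector_mult_def sum_distrib_left mult_ac)

lemma mpow_cmat_scale: "mpow (cmat_scale c A) k = cmat_scale (c ^ k) (mpow A k)"
  by (induction k) (simp_all add: cmat_scale_1 cmat_scale_matrix_mult_left
      cmat_scale_matrix_mult_right cmat_scale_cmat_scale mult_ac)

lemma mpow_Suc_right: "mpow A (Suc k) = mpow A k ** A"
  by (induction k) (simp_all add: matrix_mul_assoc)

lemma mpow_eigenvector: "A *v v = l *s v \<Longrightarrow> mpow A k *v v = l ^ k *s v"
  by (induction k) (simp_all add: matrix_vector_mul_assoc[symmetric] vector_scalar_commute
      vector_smult_assoc mult.commute)

lemma norm_mpow_entry_le: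
  fixes A :: "complex^'n^'n"
  assumes "\<And>x. norm (A *v x) \<le> K * norm x" "K \<ge> 0"
  shows "norm (mpow A k $ a $ b) \<le> K ^ k"
proof -
  have "norm (mpow A k *v x) \<le> K ^ k * norm (x::complex^'n)" for x
  proof (induction k)
    case (Suc k)
    have "norm (mpow A (Suc k) *v x) \<le> K * norm (mpow A k *v x)"
      by (simp add: matrix_vector_mul_assoc[symmetric] assms(1))
    also have "\<dots> \<le> K * (K ^ k * norm x)" using Suc assms(2) by (rule mult_left_mono)
    finally show ?case by simp
  qed simp
  moreover have "norm (axis b (1::complex)) = 1"
    by (simp add: norm_eq_1 inner_axis')
  ultimately have bound: "norm (mpow A k *v axis b 1) \<le> K ^ k"
    by (metis mult.right_neutral)
  have "norm (mpow A k $ a $ b) \<le> norm (mpow A k *v axis b 1)"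
    unfolding matrix_entry_eq_axis by (rule Finite_Cartesian_Product.norm_nth_le)
  with bound show ?thesis by linarith
qed

definition exp_coeff :: "complex \<Rightarrow> nat \<Rightarrow> complex" where
  "exp_coeff c n = c ^ n / fact n"

lemma summable_exp_coeff_mpow_entry: "summable (\<lambda>n. exp_coeff c n * mpow A n $ a $ b)"
proof -
  obtain K where K: "K \<ge> 0" "\<And>x. norm (A *v x) \<le> K * norm x"
    using matrix_vector_mult_bounded[of A] by blast
  show ?thesis
  proof (rule summable_comparison_test)
    show "summable (\<lambda>n. (norm c * K) ^ n /\<^sub>R fact n)" by (rule summable_exp_generic)
    have "norm (exp_coeff c n * mpow A n $ a $ b) \<le> (norm c) ^ n / fact n * K ^ n" for n
      unfolding exp_coeff_def norm_mult norm_divide norm_power norm_fact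
      by (rule mult_left_mono[OF norm_mpow_entry_le[OF K(2,1)]]) simp
    then show "\<exists>N. \<forall>n\<ge>N. norm (exp_coeff c n * mpow A n $ a $ b) \<le> (norm c * K) ^ n /\<^sub>R fact n"
      by (simp add: power_mult_distrib divide_inverse mult_ac)
  qed
qed

lemma mexp_cmat_scale_entry:
  "mexp (cmat_scale c A) $ a $ b = (\<Sum>n. exp_coeff c n * mpow A n $ a $ b)"
proof -
  define F where "F n = (1 / fact n) *\<^sub>R mpow (cmat_scale c A) n" for n
  have F: "F n $ a' $ b' = exp_coeff c n * mpow A n $ a' $ b'" for n a' b'
    unfolding F_def mpow_cmat_scale
    by (simp add: cmat_scale_def exp_coeff_def) (simp add: scaleR_conv_of_real divide_inverse mult_ac)
  have "summable (\<lambda>n. F n $ a')" for a'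
    by (rule summable_vec_componentwise(1)) (simp add: F summable_exp_coeff_mpow_entry)
  then have "mexp (cmat_scale c A) $ a = (\<Sum>n. F n $ a)"
    unfolding mexp_def F_def[symmetric] by (rule summable_vec_componentwise(2))
  also have "\<dots> $ b = (\<Sum>n. F n $ a $ b)"
    by (rule summable_vec_componentwise(2)) (simp add: F summable_exp_coeff_mpow_entry)
  finally show ?thesis by (simp add: F)
qed

lemma mexp_cmat_scale_matrix_mult_entry:
  "(mexp (cmat_scale c A) ** B) $ a $ b = (\<Sum>n. exp_coeff c n * (mpow A n ** B) $ a $ b)"
proof -
  have "(mexp (cmat_scale c A) ** B) $ a $ b
      = (\<Sum>k\<in>UNIV. (\<Sum>n. exp_coeff c n * mpow A n $ a $ k) * B $ k $ b)"
    by (simp add: matrix_matrix_mult_def mexp_cmat_scale_entry)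
  also have "\<dots> = (\<Sum>n. \<Sum>k\<in>UNIV. exp_coeff c n * mpow A n $ a $ k * B $ k $ b)"
    by (rule sum_suminf_mult_swap) (rule summable_exp_coeff_mpow_entry)
  also have "\<dots> = (\<Sum>n. exp_coeff c n * (mpow A n ** B) $ a $ b)"
    by (simp add: matrix_matrix_mult_def sum_distrib_left mult_ac)
  finally show ?thesis .
qed

lemma matrix_mult_mexp_cmat_scale_entry:
  "(B ** mexp (cmat_scale c A)) $ a $ b = (\<Sum>n. exp_coeff c n * (B ** mpow A n) $ a $ b)"
proof -
  have "(B ** mexp (cmat_scale c A)) $ a $ b
      = (\<Sum>k\<in>UNIV. (\<Sum>n. exp_coeff c n * mpow A n $ k $ b) * B $ a $ k)"
    by (simp add: matrix_matrix_mult_def mexp_cmat_scale_entry mult.commute)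
  also have "\<dots> = (\<Sum>n. \<Sum>k\<in>UNIV. exp_coeff c n * mpow A n $ k $ b * B $ a $ k)"
    by (rule sum_suminf_mult_swap) (rule summable_exp_coeff_mpow_entry)
  also have "\<dots> = (\<Sum>n. exp_coeff c n * (B ** mpow A n) $ a $ b)"
    by (simp add: matrix_matrix_mult_def sum_distrib_left mult_ac)
  finally show ?thesis .
qed

lemma mexp_cmat_scale_commute: "mexp (cmat_scale c A) ** A = A ** mexp (cmat_scale c A)"
proof -
  have "mpow A n ** A = A ** mpow A n" for n
    by (simp flip: mpow_Suc_right mpow.simps(2))
  then show ?thesis
    by (simp add: vec_eq_iff mexp_cmat_scale_matrix_mult_entry matrix_mult_mexp_cmat_scale_entry)
qed

lemma mexp_cmat_scale_0: "mexp (cmat_scale 0 A) = mat 1"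
proof -
  have "mexp (cmat_scale 0 A) $ a $ b = mat 1 $ a $ b" for a b
  proof -
    have "mexp (cmat_scale 0 A) $ a $ b = (\<Sum>n. (mpow A n $ a $ b / fact n) * 0 ^ n)"
      by (simp add: mexp_cmat_scale_entry exp_coeff_def mult_ac)
    also have "\<dots> = mat 1 $ a $ b" by (subst powser_zero) simp
    finally show ?thesis .
  qed
  then show ?thesis by (simp add: vec_eq_iff)
qed

lemma mexp_cmat_scale_eigenvector:
  assumes "A *v v = l *s v"
  shows "mexp (cmat_scale c A) *v v = exp (c * l) *s v"
proof -
  have "(mexp (cmat_scale c A) *v v) $ a = exp (c * l) * v $ a" for a
  proof -
    have "(mexp (cmat_scale c A) *v v) $ a
        = (\<Sum>k\<in>UNIV. (\<Sum>n. exp_coeff c n * mpow A n $ a $ k) * v $ k)"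
      by (simp add: matrix_vector_mult_def mexp_cmat_scale_entry)
    also have "\<dots> = (\<Sum>n. exp_coeff c n * (mpow A n *v v) $ a)"
      by (subst sum_suminf_mult_swap)
        (simp_all add: summable_exp_coeff_mpow_entry matrix_vector_mult_def sum_distrib_left mult_ac)
    also have "\<dots> = (\<Sum>n. (c * l) ^ n /\<^sub>R fact n * v $ a)"
      by (simp add: mpow_eigenvector[OF assms] exp_coeff_def power_mult_distrib
          scaleR_conv_of_real divide_inverse mult_ac)
    also have "\<dots> = (\<Sum>n. (c * l) ^ n /\<^sub>R fact n) * v $ a"
      by (rule suminf_mult2[symmetric]) (rule summable_exp_generic)
    finally show ?thesis by (simp add: exp_def)
  qed
  then show ?thesis by (simp add: vec_eq_iff)
qed

lemma has_vector_derivative_vec: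
  fixes f :: "real \<Rightarrow> 'a::real_normed_vector ^'n"
  assumes "\<And>i. ((\<lambda>x. f x $ i) has_vector_derivative D $ i) (at x)"
  shows "(f has_vector_derivative D) (at x)"
proof -
  have "((\<lambda>y. ((f y - f x) - (y - x) *\<^sub>R D) /\<^sub>R norm (y - x)) \<longlongrightarrow> 0) (at x)"
  proof (rule vec_tendstoI)
    fix i
    from assms[of i] have "((\<lambda>y. (1 / \<bar>y - x\<bar>) *\<^sub>R (f y $ i - (f x $ i + (y - x) *\<^sub>R D $ i))) \<longlongrightarrow> 0) (at x)"
      unfolding has_vector_derivative_def has_derivative_at2 by simp
    then show "((\<lambda>y. (((f y - f x) - (y - x) *\<^sub>R D) /\<^sub>R norm (y - x)) $ i) \<longlongrightarrow> 0 $ i) (at x)"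
      by (simp add: diff_diff_eq inverse_eq_divide)
  qed
  then show ?thesis
    unfolding has_vector_derivative_def has_derivative_at2
    by (simp add: bounded_linear_scaleR_left diff_diff_eq inverse_eq_divide)
qed

text \<open>Each entry is a power series in \<open>t\<close>, which is differentiated termwise.\<close>
lemma mexp_cmat_scale_has_vector_derivative:
  "((\<lambda>t. mexp (cmat_scale (c * of_real t) A)) has_vector_derivative
      mexp (cmat_scale (c * of_real t) A) ** cmat_scale c A) (at t)"
proof (intro has_vector_derivative_vec)
  fix a b
  define f where "f n = c ^ n / fact n * mpow A n $ a $ b" for n
  have entry: "mexp (cmat_scale (c * z) A) $ a $ b = (\<Sum>n. f n * z ^ n)" for z
    by (simp add: mexp_cmat_scale_entry f_def exp_coeff_def power_mult_distrib mult_ac)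
  have "summable (\<lambda>n. f n * z ^ n)" for z
    using summable_exp_coeff_mpow_entry[of "c * z" A a b]
    by (simp add: f_def exp_coeff_def power_mult_distrib mult_ac)
  then have "((\<lambda>z. \<Sum>n. f n * z ^ n) has_field_derivative (\<Sum>n. diffs f n * of_real t ^ n)) (at (of_real t))"
    by (rule termdiffs_strong_converges_everywhere)
  moreover have "diffs f n * z ^ n = exp_coeff (c * z) n * (mpow A n ** cmat_scale c A) $ a $ b" for n z
  proof -
    have "(mpow A n ** cmat_scale c A) $ a $ b = c * mpow A (Suc n) $ a $ b"
      unfolding cmat_scale_matrix_mult_right mpow_Suc_right[symmetric] by (simp add: cmat_scale_def)
    moreover have "(fact n + fact n * of_nat n :: complex) \<noteq> 0"
      by (metis (no_types) fact_Suc fact_nonzero of_nat_Suc distrib_left mult.commute mult_1)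
    ultimately show ?thesis
      unfolding diffs_def f_def exp_coeff_def
      by (simp add: power_mult_distrib field_simps del: mpow.simps)
  qed
  ultimately show "((\<lambda>t. mexp (cmat_scale (c * of_real t) A) $ a $ b) has_vector_derivative
      (mexp (cmat_scale (c * of_real t) A) ** cmat_scale c A) $ a $ b) (at t)"
    using has_vector_derivative_real_field
    by (fastforce simp: entry mexp_cmat_scale_matrix_mult_entry)
qed

lemma mexp_cmat_scale_vector_has_vector_derivative:
  "((\<lambda>t. mexp (cmat_scale (c * of_real t) A) *v v) has_vector_derivative
      c *s (A *v (mexp (cmat_scale (c * of_real t) A) *v v))) (at t)"
proof -
  have "((\<lambda>t. mexp (cmat_scale (c * of_real t) A) *v v) has_vector_derivative
      mexp (cmat_scale (c * of_real t) A) *v 0 + (mexp (cmat_scale (c * of_real t) A) ** cmat_scale c A) *v v) (at t)"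
    by (rule bounded_bilinear.has_vector_derivative[OF bounded_bilinear_matrix_vector_mult
          mexp_cmat_scale_has_vector_derivative]) simp
  moreover have "mexp (cmat_scale (c * of_real t) A) *v (A *v v) = A *v (mexp (cmat_scale (c * of_real t) A) *v v)"
    by (simp add: matrix_vector_mul_assoc mexp_cmat_scale_commute)
  ultimately show ?thesis
    by (simp add: cmat_scale_matrix_vector_mult matrix_vector_mul_assoc[symmetric] vector_scalar_commute)
qed

definition evolution :: "complex^'n^'n \<Rightarrow> real \<Rightarrow> complex^'n^'n" where
  "evolution H t = mexp (cmat_scale (\<i> * of_real t) H)"

lemma evolution_0: "evolution H 0 = mat 1"
  by (simp add: evolution_def mexp_cmat_scale_0)

lemma evolution_eigenvector:
  assumes "H *v v = of_real l *s v"
  shows "evolution H t *v v = exp (\<i> * of_real (t * l)) *s v"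
  using mexp_cmat_scale_eigenvector[OF assms, of "\<i> * of_real t"] by (simp add: evolution_def mult.assoc)

lemma evolution_has_vector_derivative:
  "((\<lambda>t. evolution H t *v v) has_vector_derivative \<i> *s (H *v (evolution H t *v v))) (at t)"
  unfolding evolution_def by (rule mexp_cmat_scale_vector_has_vector_derivative)

lemma evolution_reverse_has_vector_derivative:
  "((\<lambda>t. evolution H (- t) *v v) has_vector_derivative - \<i> *s (H *v (evolution H (- t) *v v))) (at t)"
  using mexp_cmat_scale_vector_has_vector_derivative[of "- \<i>" H v t]
  by (simp add: evolution_def)

lemma norm_evolution:
  assumes "hermitian H"
  shows "norm (evolution H t *v v) = norm v"
proof -
  define w where "w t = evolution H t *v v" for t
  have "((\<lambda>t. inner (w t) (w t)) has_real_derivative 0) (at t)" for t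
  proof -
    have "((\<lambda>t. inner (w t) (w t)) has_vector_derivative
        inner (w t) (\<i> *s (H *v w t)) + inner (\<i> *s (H *v w t)) (w t)) (at t)"
      unfolding w_def
      by (rule bounded_bilinear.has_vector_derivative[OF bounded_bilinear_inner
            evolution_has_vector_derivative evolution_has_vector_derivative])
    moreover have "inner (w t) (\<i> *s (H *v w t)) = 0"
      using hermitian_cinner_real[OF assms, of "w t"]
      by (simp add: inner_vec_eq_Re_cinner cinner_smult_right)
    ultimately show ?thesis
      by (simp add: has_real_derivative_iff_has_vector_derivative inner_commute)
  qed
  then have "inner (w t) (w t) = inner (w 0) (w 0)"
    using DERIV_isconst_all by blast
  then show ?thesis
    by (simp add: w_def evolution_0 flip: power2_norm_eq_inner)
qed

lemma encoded_eq: "encoded H U psi0 g = evolution H g *v (U *v (evolution H (- g) *v psi0))"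
  by (simp add: encoded_def evolution_def matrix_vector_mul_assoc matrix_mul_assoc)

lemma encoded_has_vector_derivative:
  fixes H U :: "complex^'n^'n" and psi0 :: "complex^'n" and g :: real
  defines "phi \<equiv> evolution H (- g) *v psi0"
  shows "(encoded H U psi0 has_vector_derivative
      evolution H g *v (\<i> *s (H *v (U *v phi) - U *v (H *v phi)))) (at g)"
proof -
  have "((\<lambda>g. U *v (evolution H (- g) *v psi0)) has_vector_derivative
      U *v (- \<i> *s (H *v phi))) (at g)"
    unfolding phi_def
    by (rule bounded_linear.has_vector_derivative[OF matrix_vector_mul_bounded_linear
          evolution_reverse_has_vector_derivative])
  then have "((\<lambda>g. evolution H g *v (U *v (evolution H (- g) *v psi0))) has_vector_derivative
      evolution H g *v (U *v (- \<i> *s (H *v phi)))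
      + (mexp (cmat_scale (\<i> * of_real g) H) ** cmat_scale \<i> H) *v (U *v phi)) (at g)"
    unfolding evolution_def phi_def
    by (rule bounded_bilinear.has_vector_derivative[OF bounded_bilinear_matrix_vector_mult
          mexp_cmat_scale_has_vector_derivative])
  then show ?thesis
    unfolding encoded_eq[abs_def]
    by (simp add: evolution_def cmat_scale_matrix_vector_mult matrix_vector_mul_assoc[symmetric]
        vector_scalar_commute matrix_vector_mult_diff_distrib vector_ssub_ldistrib vec.neg)
qed

section \<open>Quantum Fisher information of the encoded family\<close>

lemma QFI_le_norm_derivative:
  "QFI psi g \<le> 4 * (norm (vector_derivative psi (at g)))\<^sup>2"
  by (simp add: QFI_def Let_def norm_power2_eq_Re_cinner)

lemma norm_encoded_derivative_le:
  assumes herm: "hermitian H" and bound: "\<And>x. norm (H *v x) \<le> K * norm x"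
    and U: "unitary U" and psi0: "norm psi0 = 1"
  shows "norm (vector_derivative (encoded H U psi0) (at g)) \<le> 2 * K"
proof -
  define phi where "phi = evolution H (- g) *v psi0"
  have phi: "norm phi = 1"
    unfolding phi_def using psi0 by (simp add: norm_evolution[OF herm])
  have "vector_derivative (encoded H U psi0) (at g)
      = evolution H g *v (\<i> *s (H *v (U *v phi) - U *v (H *v phi)))"
    unfolding phi_def by (rule vector_derivative_at[OF encoded_has_vector_derivative])
  then have "norm (vector_derivative (encoded H U psi0) (at g)) = norm (H *v (U *v phi) - U *v (H *v phi))"
    using norm_smult_unimodular[of \<i> "H *v (U *v phi) - U *v (H *v phi)"]
    by (simp add: norm_evolution[OF herm])
  also have "\<dots> \<le> norm (H *v (U *v phi)) + norm (H *v phi)"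
    using norm_triangle_ineq4[of "H *v (U *v phi)" "U *v (H *v phi)"]
    by (simp add: unitary_norm_preserving[OF U])
  also have "\<dots> \<le> K * norm (U *v phi) + K * norm phi"
    by (intro add_mono bound)
  finally show ?thesis
    by (simp add: unitary_norm_preserving[OF U] phi)
qed

lemma QFI_encoded_le:
  assumes "hermitian H" "\<And>x. norm (H *v x) \<le> K * norm x" "K \<ge> 0"
    and "unitary U" "norm psi0 = 1"
  shows "QFI (encoded H U psi0) g \<le> 4 * (2 * K)\<^sup>2"
proof -
  have "(norm (vector_derivative (encoded H U psi0) (at g)))\<^sup>2 \<le> (2 * K)\<^sup>2"
    by (rule power_mono[OF norm_encoded_derivative_le[OF assms(1,2,4,5)] norm_ge_zero])
  with QFI_le_norm_derivative[of "encoded H U psi0" g] show ?thesis by linarith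
qed

lemma QFI_two_level:
  assumes u: "cinner u u = 1" and w: "cinner w w = 1" and uw: "cinner u w = 0"
    and psi: "psi g = Z *s u + W *s w"
    and d: "vector_derivative psi (at g) = (\<i> * of_real N) *s (Z *s u - W *s w)"
  shows "QFI psi g = 4 * N\<^sup>2 * ((cmod Z)\<^sup>2 + (cmod W)\<^sup>2 - ((cmod Z)\<^sup>2 - (cmod W)\<^sup>2)\<^sup>2)"
proof -
  have d': "vector_derivative psi (at g) = (\<i> * of_real N * Z) *s u + (- \<i> * of_real N * W) *s w"
    unfolding d by (simp add: vec_eq_iff algebra_simps)
  have sq: "cnj z * z = of_real ((cmod z)\<^sup>2)" for z
    using complex_norm_square[of z] by (simp add: mult.commute)
  have "cinner (vector_derivative psi (at g)) (vector_derivative psi (at g))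
      = of_real ((cmod (\<i> * of_real N * Z))\<^sup>2 + (cmod (- \<i> * of_real N * W))\<^sup>2)"
    unfolding d' cinner_orthonormal_combination[OF u w uw] sq by simp
  also have "\<dots> = of_real (N\<^sup>2 * ((cmod Z)\<^sup>2 + (cmod W)\<^sup>2))"
    by (simp add: norm_mult power_mult_distrib algebra_simps)
  finally have dd: "cinner (vector_derivative psi (at g)) (vector_derivative psi (at g)) = \<dots>" .
  have "cinner (psi g) (vector_derivative psi (at g)) = \<i> * of_real N * (cnj Z * Z - cnj W * W)"
    unfolding psi d' cinner_orthonormal_combination[OF u w uw] by (simp add: algebra_simps)
  also have "\<dots> = \<i> * of_real N * of_real ((cmod Z)\<^sup>2 - (cmod W)\<^sup>2)"
    unfolding sq by simp
  finally have pd: "cinner (psi g) (vector_derivative psi (at g)) = \<dots>" .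
  show ?thesis
    unfolding QFI_def Let_def dd pd norm_mult norm_of_real
    by (simp add: power_mult_distrib right_diff_distrib distrib_left)
qed

lemma balanced_state_eq:
  "of_real (1 / sqrt 2) *s (u + e *s w) = of_real (1 / sqrt 2) *s u + (of_real (1 / sqrt 2) * e) *s w"
  by (simp add: vector_add_ldistrib vector_smult_assoc)

lemma balanced_weight: "cmod e = 1 \<Longrightarrow> (cmod (of_real (1 / sqrt 2) * e))\<^sup>2 = 1 / 2"
  by (simp add: norm_mult norm_divide power_divide)

lemma norm_balanced_state:
  assumes "cinner u u = 1" "cinner w w = 1" "cinner u w = 0" "cmod e = 1"
  shows "norm (of_real (1 / sqrt 2) *s (u + e *s w)) = 1"
proof -
  have "(norm (of_real (1 / sqrt 2) *s (u + e *s w)))\<^sup>2 = 1"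
    unfolding balanced_state_eq norm_orthonormal_combination_power2[OF assms(1-3)]
      balanced_weight[OF assms(4)]
    by (simp add: norm_divide power_divide)
  then show ?thesis by (metis abs_norm_cancel real_sqrt_abs real_sqrt_one)
qed

context
  fixes H U :: "complex^'n^'n" and N :: real and lp lm :: "complex^'n" and q q' :: complex
  assumes lp: "H *v lp = of_real (N / 2) *s lp" and lm: "H *v lm = of_real (- N / 2) *s lm"
    and U_lp: "U *v lp = q *s lm" and U_lm: "U *v lm = q' *s lp"
begin

lemma encoded_two_level:
  fixes zp zm :: complex and g :: real
  defines "Z \<equiv> zm * q' * exp (\<i> * of_real (g * N))"
    and "W \<equiv> zp * q * exp (- \<i> * of_real (g * N))"
  shows "encoded H U (zp *s lp + zm *s lm) g = Z *s lp + W *s lm"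
    and "vector_derivative (encoded H U (zp *s lp + zm *s lm)) (at g)
      = (\<i> * of_real N) *s (Z *s lp - W *s lm)"
proof -
  define a where "a = exp (\<i> * of_real (g * N / 2))"
  define b where "b = exp (- \<i> * of_real (g * N / 2))"
  have ev: "evolution H g *v lp = a *s lp" "evolution H g *v lm = b *s lm"
      "evolution H (- g) *v lp = b *s lp" "evolution H (- g) *v lm = a *s lm"
    by (simp_all add: evolution_eigenvector[OF lp] evolution_eigenvector[OF lm] a_def b_def)
  have ab: "a * a = exp (\<i> * of_real (g * N))" "b * b = exp (- \<i> * of_real (g * N))"
    by (simp_all add: a_def b_def mult_ac flip: exp_add)
  have Z: "Z = zm * q' * (a * a)" and W: "W = zp * q * (b * b)"
    unfolding Z_def W_def ab by (rule refl)+
  define phi where "phi = evolution H (- g) *v (zp *s lp + zm *s lm)"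
  have phi: "phi = (zp * b) *s lp + (zm * a) *s lm"
    by (simp add: phi_def matrix_vector_right_distrib vector_scalar_commute ev vector_smult_assoc)
  show "encoded H U (zp *s lp + zm *s lm) g = Z *s lp + W *s lm"
    unfolding encoded_eq phi_def[symmetric] phi
    by (simp add: matrix_vector_right_distrib vector_scalar_commute ev U_lp U_lm
        vector_smult_assoc Z W vec_eq_iff algebra_simps)
  have "vector_derivative (encoded H U (zp *s lp + zm *s lm)) (at g)
      = evolution H g *v (\<i> *s (H *v (U *v phi) - U *v (H *v phi)))"
    unfolding phi_def by (rule vector_derivative_at[OF encoded_has_vector_derivative])
  also have "H *v (U *v phi) - U *v (H *v phi) = (of_real N * zm * a * q') *s lp - (of_real N * zp * b * q) *s lm"
    unfolding phi
    by (simp add: matrix_vector_right_distrib vector_scalar_commute U_lp U_lm lp lm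
        vector_smult_assoc vec_eq_iff algebra_simps)
  also have "evolution H g *v (\<i> *s \<dots>) = (\<i> * of_real N) *s (Z *s lp - W *s lm)"
    by (simp add: vector_scalar_commute matrix_vector_mult_diff_distrib ev vector_smult_assoc Z W
        vec_eq_iff algebra_simps)
  finally show "vector_derivative (encoded H U (zp *s lp + zm *s lm)) (at g)
      = (\<i> * of_real N) *s (Z *s lp - W *s lm)" .
qed

lemma QFI_encoded_two_level:
  assumes "cinner lp lp = 1" "cinner lm lm = 1" "cinner lp lm = 0"
    and "cmod q = 1" "cmod q' = 1"
  shows "QFI (encoded H U (zp *s lp + zm *s lm)) g
    = 4 * N\<^sup>2 * ((cmod zp)\<^sup>2 + (cmod zm)\<^sup>2 - ((cmod zp)\<^sup>2 - (cmod zm)\<^sup>2)\<^sup>2)"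
proof -
  have "cmod (exp (\<i> * of_real r)) = 1" "cmod (exp (- \<i> * of_real r)) = 1" for r
    using norm_exp_i_times[of r] norm_exp_i_times[of "- r"] by simp_all
  then have "cmod (zm * q' * exp (\<i> * of_real (g * N))) = cmod zm"
      "cmod (zp * q * exp (- \<i> * of_real (g * N))) = cmod zp"
    by (simp_all add: norm_mult assms(4,5))
  then show ?thesis
    using QFI_two_level[OF assms(1-3) encoded_two_level] by (simp add: power2_commute)
qed

lemma QFI_encoded_balanced:
  assumes "cinner lp lp = 1" "cinner lm lm = 1" "cinner lp lm = 0"
    and "cmod q = 1" "cmod q' = 1" "cmod e = 1"
  shows "QFI (encoded H U (of_real (1 / sqrt 2) *s (lp + e *s lm))) g = 4 * N\<^sup>2"
  unfolding balanced_state_eq QFI_encoded_two_level[OF assms(1-5)]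
    balanced_weight[OF assms(6)]
  by (simp add: norm_divide power_divide)

end

lemma unitary_swap_exists:
  fixes u w :: "complex^'n"
  assumes u: "cinner u u = 1" and w: "cinner w w = 1" and uw: "cinner u w = 0"
  obtains U where "unitary U" "U *v u = w" "U *v w = u"
proof -
  define outer :: "complex^'n \<Rightarrow> complex^'n \<Rightarrow> complex^'n^'n"
    where "outer a b = (\<chi> i j. a $ i * cnj (b $ j))" for a b
  have outer: "outer a b *v x = cinner b x *s a" for a b x
    by (simp add: vec_eq_iff outer_def matrix_vector_mult_def cinner_def sum_distrib_left mult_ac)
  define U where "U = mat 1 - outer u u - outer w w + outer w u + outer u w"
  have wu: "cinner w u = 0" using uw cnj_cinner[of u w] by simp
  have U: "U *v x = x - cinner u x *s u - cinner w x *s w + cinner u x *s w + cinner w x *s u" for x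
    unfolding U_def
    by (simp add: matrix_vector_mult_add_rdistrib matrix_vector_mult_diff_rdistrib outer)
  have "U *v (U *v x) = x" for x
  proof -
    have "cinner u (U *v x) = cinner w x" "cinner w (U *v x) = cinner u x"
      using u w uw wu by (simp_all add: U cinner_add_right cinner_diff_right cinner_smult_right)
    then have "U *v (U *v x) = U *v x - cinner w x *s u - cinner u x *s w + cinner w x *s w + cinner u x *s u"
      by (subst U) simp
    then show ?thesis by (simp add: U algebra_simps)
  qed
  then have "U ** U = mat 1" by (simp add: matrix_eq matrix_vector_mul_assoc[symmetric])
  moreover have "adjoint_mat U = U"
    unfolding U_def by (simp add: vec_eq_iff adjoint_mat_def outer_def mat_def)
  ultimately have "unitary U" by (simp add: unitary_def)
  moreover have "U *v u = w" "U *v w = u"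
    using u w uw wu by (simp_all add: U)
  ultimately show thesis by (rule that)
qed

theorem mainTheorem10:
  fixes H0 :: "complex ^ 'n ^ 'n" and N :: real and lp lm :: "complex ^ 'n"
  assumes "N > 0"
    and "hermitian H0"
    and "\<And>c. is_eigenvalue H0 c \<Longrightarrow> - N / 2 \<le> Re c \<and> Re c \<le> N / 2"
    and "H0 *v lp = complex_of_real (N / 2) *s lp" and "norm lp = 1"
    and "H0 *v lm = complex_of_real (- N / 2) *s lm" and "norm lm = 1"
  shows "(\<forall>psi0 U1 g. norm psi0 = 1 \<longrightarrow> unitary U1 \<longrightarrow>
            QFI (encoded H0 U1 psi0) g \<le> 4 * N\<^sup>2)
       \<and> (\<exists>psi0 U1. norm psi0 = 1 \<and> unitary U1 \<and>
            (\<forall>g. QFI (encoded H0 U1 psi0) g = 4 * N\<^sup>2))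
       \<and> (\<forall>\<alpha> chi U1 g. unitary U1
            \<longrightarrow> U1 *v lp = exp (\<i> * of_real chi) *s lm
            \<longrightarrow> U1 *v lm = exp (- \<i> * of_real chi) *s lp
            \<longrightarrow> (\<forall>v. cinner lp v = 0 \<longrightarrow> cinner lm v = 0 \<longrightarrow>
                   cinner lp (U1 *v v) = 0 \<and> cinner lm (U1 *v v) = 0)
            \<longrightarrow> QFI (encoded H0 U1
                   (complex_of_real (1 / sqrt 2) *s (lp + exp (\<i> * of_real \<alpha>) *s lm))) g
                = 4 * N\<^sup>2)"
proof -
  have lp: "cinner lp lp = 1" and lm: "cinner lm lm = 1"
    using assms(5,7) by (simp_all add: cinner_self_eq_norm_power2)
  have lp_lm: "cinner lp lm = 0"
    using hermitian_eigenvectors_orthogonal[OF assms(2,4,6)] assms(1) by simp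
  have unimodular: "cmod (exp (\<i> * of_real r)) = 1" "cmod (exp (- \<i> * of_real r)) = 1" for r
    using norm_exp_i_times[of r] norm_exp_i_times[of "- r"] by simp_all
  have spectrum: "- (N / 2) \<le> Re c \<and> Re c \<le> N / 2" if "is_eigenvalue H0 c" for c
    using assms(3)[OF that] by simp
  have bound: "QFI (encoded H0 U1 psi0) g \<le> 4 * N\<^sup>2" if "unitary U1" "norm psi0 = 1" for U1 psi0 g
    using QFI_encoded_le[OF assms(2) hermitian_norm_matrix_vector_le[OF assms(2) spectrum] _ that]
      assms(1) by simp
  have optimal: "QFI (encoded H0 U1 (of_real (1 / sqrt 2) *s (lp + exp (\<i> * of_real \<alpha>) *s lm))) g
      = 4 * N\<^sup>2"
    if "U1 *v lp = exp (\<i> * of_real chi) *s lm" "U1 *v lm = exp (- \<i> * of_real chi) *s lp"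
    for U1 \<alpha> chi g
    using QFI_encoded_balanced[OF assms(4,6) that lp lm lp_lm] unimodular by blast
  obtain U0 where U0: "unitary U0" "U0 *v lp = lm" "U0 *v lm = lp"
    by (rule unitary_swap_exists[OF lp lm lp_lm])
  define psi0 where "psi0 = of_real (1 / sqrt 2) *s (lp + exp (\<i> * of_real 0) *s lm)"
  have "norm psi0 = 1"
    unfolding psi0_def by (rule norm_balanced_state[OF lp lm lp_lm unimodular(1)])
  moreover have "\<forall>g. QFI (encoded H0 U0 psi0) g = 4 * N\<^sup>2"
    unfolding psi0_def using U0 by (intro allI optimal[where chi = 0]) simp_all
  ultimately show ?thesis
    using bound optimal U0(1) by blast
qed

end
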